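(* Let $n\ge1$, $0<\epsilon\le1$, $0\le\tau<1$, and let $G=(V,E)$ be a comparison graph with $|E|\ge1$. Let $P$ be a distribution on $[n]$ with $\|P-U_n\|\ge\epsilon$ and $|E|(\mu_P-\mu_P^2)< c(G)(\gamma_P-\mu_P^2)$. If $c(G)\le \dfrac{|E|^2(1-\tau)^2\epsilon^2}{16\sqrt n}$, then the collision-based algorithm $(G,\tau)$ outputs YES on $P$ with probability at most $1/4$.
   Context: $U_n$ is the uniform distribution on $[n]$; $\|P-Q\|=\sum_i|P_i-Q_i|$. $\mu_P=\sum_iP_i^2$, $\gamma_P=\sum_iP_i^3$. A comparison graph is a finite simple undirected graph $G=(V,E)$; $c(G)$ is the number of ordered triples $(u,v,w)$ of distinct vertices with $\{u,v\},\{v,w\}\in E$. Given $P$, each vertex $v$ receives an independent sample $S(v)\sim P$; for $e=\{u,v\}\in E$, $\mathbf 1_e=\mathbf 1[S(u)=S(v)]$; $Z=\sum_{e\in E}\mathbf 1_e$ and $T=|E|\frac{1+\tau\epsilon^2}{n}$; the algorithm $(G,\tau)$ outputs YES if $Z<T$ and NO otherwise. *)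

theory Defs
  imports Main "HOL-Library.FuncSet" Complex_Main
begin

definition comparison_graph :: "'a set \<Rightarrow> 'a set set \<Rightarrow> bool" where
  "comparison_graph V E \<longleftrightarrow> finite V \<and>
     (\<forall>e\<in>E. \<exists>u v. u \<in> V \<and> v \<in> V \<and> u \<noteq> v \<and> e = {u, v})"

definition cG :: "'a set \<Rightarrow> 'a set set \<Rightarrow> nat" where
  "cG V E = card {(u, v, w). u \<in> V \<and> v \<in> V \<and> w \<in> V \<and> u \<noteq> v \<and> v \<noteq> w \<and> u \<noteq> w
                 \<and> {u, v} \<in> E \<and> {v, w} \<in> E}"

definition is_distr :: "nat \<Rightarrow> (nat \<Rightarrow> real) \<Rightarrow> bool" where
  "is_distr n P \<longleftrightarrow> (\<forall>i\<in>{1..n}. P i \<ge> 0) \<and> (\<Sum>i\<in>{1..n}. P i) = 1"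

definition dist_unif :: "nat \<Rightarrow> (nat \<Rightarrow> real) \<Rightarrow> real" where
  "dist_unif n P = (\<Sum>i\<in>{1..n}. \<bar>P i - 1 / real n\<bar>)"

definition muP :: "nat \<Rightarrow> (nat \<Rightarrow> real) \<Rightarrow> real" where
  "muP n P = (\<Sum>i\<in>{1..n}. P i ^ 2)"

definition gammaP :: "nat \<Rightarrow> (nat \<Rightarrow> real) \<Rightarrow> real" where
  "gammaP n P = (\<Sum>i\<in>{1..n}. P i ^ 3)"

definition collisions :: "'a set set \<Rightarrow> ('a \<Rightarrow> nat) \<Rightarrow> nat" where
  "collisions E S = card {e \<in> E. \<forall>x\<in>e. \<forall>y\<in>e. S x = S y}"

definition outputs_yes :: "nat \<Rightarrow> real \<Rightarrow> real \<Rightarrow> 'a set set \<Rightarrow> ('a \<Rightarrow> nat) \<Rightarrow> bool" where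
  "outputs_yes n \<tau> \<epsilon> E S \<longleftrightarrow>
     real (collisions E S) < real (card E) * (1 + \<tau> * \<epsilon>^2) / real n"

definition prob_yes :: "nat \<Rightarrow> (nat \<Rightarrow> real) \<Rightarrow> real \<Rightarrow> real \<Rightarrow> 'a set \<Rightarrow> 'a set set \<Rightarrow> real" where
  "prob_yes n P \<tau> \<epsilon> V E =
     (\<Sum>S\<in>(V \<rightarrow>\<^sub>E {1..n}). if outputs_yes n \<tau> \<epsilon> E S then (\<Prod>v\<in>V. P (S v)) else 0)"

end

theory Submission
  imports Defs
begin

(* Chebyshev's inequality for the collision count Z.  With \<mu> = muP and \<gamma> = gammaP one has
   E Z = |E| \<mu> and Var Z = |E| (\<mu> - \<mu>^2) + N (\<gamma> - \<mu>^2), where N \<le> c(G) counts ordered pairs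
   of distinct edges sharing a vertex: disjoint edges collide independently, while two edges
   sharing a vertex both collide iff their three vertices receive the same sample.
   If P is \<epsilon>-far from uniform then \<delta> = \<mu> - 1/n \<ge> \<epsilon>^2/n (Cauchy-Schwarz), so the threshold T
   lies at least |E| (1 - \<tau>) \<delta> below the mean; and \<gamma> - \<mu>^2 \<le> \<delta>/n + \<delta>^(3/2), which together
   with the hypotheses bounds Var Z by a quarter of the square of that distance. *)

definition sample_expectation ::
    "nat \<Rightarrow> (nat \<Rightarrow> real) \<Rightarrow> 'a set \<Rightarrow> (('a \<Rightarrow> nat) \<Rightarrow> real) \<Rightarrow> real" where
  "sample_expectation n P V X = (\<Sum>S\<in>V \<rightarrow>\<^sub>E {1..n}. (\<Prod>v\<in>V. P (S v)) * X S)"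

lemma sample_expectation_cong:
  assumes "\<And>S. S \<in> V \<rightarrow>\<^sub>E {1..n} \<Longrightarrow> X S = Y S"
  shows "sample_expectation n P V X = sample_expectation n P V Y"
  unfolding sample_expectation_def using assms by simp

lemma sample_expectation_add:
  "sample_expectation n P V (\<lambda>S. X S + Y S) = sample_expectation n P V X + sample_expectation n P V Y"
  by (simp add: sample_expectation_def distrib_left sum.distrib)

lemma sample_expectation_scale:
  "sample_expectation n P V (\<lambda>S. c * X S) = c * sample_expectation n P V X"
  by (simp add: sample_expectation_def sum_distrib_left mult.left_commute)

lemma sample_expectation_sum:
  "sample_expectation n P V (\<lambda>S. \<Sum>i\<in>I. X i S) = (\<Sum>i\<in>I. sample_expectation n P V (X i))"
  unfolding sample_expectation_def sum_distrib_left by (rule sum.swap)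

lemma sample_expectation_const:
  assumes "finite V" and "sum P {1..n} = 1"
  shows "sample_expectation n P V (\<lambda>_. c) = c"
  using prod_sum_PiE[OF assms(1), of "\<lambda>_. {1..n}" "\<lambda>_. P"] assms(2)
  by (simp add: sample_expectation_def sum_distrib_right[symmetric])

lemma sample_expectation_mono:
  assumes "\<forall>i\<in>{1..n}. 0 \<le> P i" and "\<And>S. S \<in> V \<rightarrow>\<^sub>E {1..n} \<Longrightarrow> X S \<le> Y S"
  shows "sample_expectation n P V X \<le> sample_expectation n P V Y"
  unfolding sample_expectation_def
proof (rule sum_mono)
  fix S assume S: "S \<in> V \<rightarrow>\<^sub>E {1..n}"
  then have "0 \<le> (\<Prod>v\<in>V. P (S v))"
    using assms(1) by (intro prod_nonneg) (auto simp: PiE_def Pi_def)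
  with assms(2)[OF S] show "(\<Prod>v\<in>V. P (S v)) * X S \<le> (\<Prod>v\<in>V. P (S v)) * Y S"
    by (rule mult_left_mono)
qed

lemma sample_expectation_variance:
  assumes "finite V" and "sum P {1..n} = 1" and "sample_expectation n P V X = m"
  shows "sample_expectation n P V (\<lambda>S. (X S - m)^2)
       = sample_expectation n P V (\<lambda>S. (X S)^2) - m^2"
proof -
  have "(\<lambda>S. (X S - m)^2) = (\<lambda>S. (X S)^2 + ((- 2 * m) * X S + m^2))"
    by (simp add: power2_diff algebra_simps)
  then have "sample_expectation n P V (\<lambda>S. (X S - m)^2)
      = sample_expectation n P V (\<lambda>S. (X S)^2) + ((- 2 * m) * m + m^2)"
    using assms by (simp only: sample_expectation_add sample_expectation_scale
        sample_expectation_const)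
  then show ?thesis
    by (simp add: power2_eq_square)
qed

lemma sample_expectation_chebyshev_lower:
  assumes "\<forall>i\<in>{1..n}. 0 \<le> P i" and "t < m"
  shows "sample_expectation n P V (\<lambda>S. of_bool (X S < t))
       \<le> sample_expectation n P V (\<lambda>S. (X S - m)^2) / (m - t)^2"
proof -
  have "of_bool (X S < t) \<le> (X S - m)^2 / (m - t)^2" for S
  proof (cases "X S < t")
    case True
    then have "(m - t)^2 \<le> (m - X S)^2"
      using assms(2) by (intro power_mono) simp_all
    then show ?thesis
      using True assms(2) by (simp add: power2_commute)
  qed simp
  then have "sample_expectation n P V (\<lambda>S. of_bool (X S < t))
      \<le> sample_expectation n P V (\<lambda>S. inverse ((m - t)^2) * (X S - m)^2)"
    using assms(1) by (intro sample_expectation_mono) (simp_all add: divide_inverse mult.commute)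
  then show ?thesis
    by (simp only: sample_expectation_scale) (simp add: divide_inverse mult.commute)
qed

lemma of_bool_Ball_eq_prod:
  assumes "finite A"
  shows "(of_bool (\<forall>x\<in>A. Q x) :: 'b :: comm_semiring_1) = (\<Prod>x\<in>A. of_bool (Q x))"
  using assms by (induction A rule: finite_induct) (simp_all add: of_bool_conj split del: split_of_bool)

lemma sample_expectation_agree:
  assumes V: "finite V" and D: "D \<subseteq> V" and g: "g \<in> D \<rightarrow> {1..n}" and sP: "sum P {1..n} = 1"
  shows "sample_expectation n P V (\<lambda>S. of_bool (\<forall>x\<in>D. S x = g x)) = (\<Prod>x\<in>D. P (g x))"
proof -
  let ?f = "\<lambda>v k. P k * (if v \<in> D then of_bool (k = g v) else 1)"
  have "(\<Prod>v\<in>V. P (S v)) * of_bool (\<forall>x\<in>D. S x = g x) = (\<Prod>v\<in>V. ?f v (S v))" for S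
  proof -
    have "of_bool (\<forall>x\<in>D. S x = g x) = (\<Prod>v\<in>V. if v \<in> D then of_bool (S v = g v) else (1::real))"
      using V D by (simp add: of_bool_Ball_eq_prod finite_subset prod.inter_restrict[symmetric]
          Int_absorb1)
    then show ?thesis by (simp add: prod.distrib)
  qed
  then have "sample_expectation n P V (\<lambda>S. of_bool (\<forall>x\<in>D. S x = g x))
      = (\<Prod>v\<in>V. \<Sum>k\<in>{1..n}. ?f v k)"
    by (simp add: sample_expectation_def prod_sum_PiE[OF V])
  also have "\<dots> = (\<Prod>v\<in>V. if v \<in> D then P (g v) else 1)"
  proof (rule prod.cong)
    fix v assume "v \<in> V"
    have "{1..n} \<inter> {k. k = g v} = {g v}" if "v \<in> D" using g that by auto
    then show "(\<Sum>k\<in>{1..n}. ?f v k) = (if v \<in> D then P (g v) else 1)"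
      using sP by simp
  qed simp
  also have "\<dots> = (\<Prod>x\<in>D. P (g x))"
    using V D by (simp add: prod.inter_restrict[symmetric] Int_absorb1)
  finally show ?thesis .
qed

definition monochromatic :: "'a set \<Rightarrow> ('a \<Rightarrow> nat) \<Rightarrow> bool" where
  "monochromatic e S \<longleftrightarrow> (\<forall>x\<in>e. \<forall>y\<in>e. S x = S y)"

lemma monochromatic_Un:
  assumes "e \<inter> f \<noteq> {}"
  shows "monochromatic e S \<and> monochromatic f S \<longleftrightarrow> monochromatic (e \<union> f) S"
  using assms unfolding monochromatic_def by (metis Int_iff Un_iff equals0I)

lemma of_bool_monochromatic:
  assumes "e \<noteq> {}" and "e \<subseteq> V" and S: "S \<in> V \<rightarrow>\<^sub>E {1..n}"
  shows "of_bool (monochromatic e S) = (\<Sum>i\<in>{1..n}. of_bool (\<forall>x\<in>e. S x = i) :: real)"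
proof -
  obtain x0 where x0: "x0 \<in> e" using assms(1) by blast
  then have "S x0 \<in> {1..n}" using assms(2) S by auto
  moreover have "(\<forall>x\<in>e. S x = i) \<longleftrightarrow> i = S x0 \<and> monochromatic e S" for i
    using x0 unfolding monochromatic_def by metis
  moreover have "{1..n} \<inter> {i. i = S x0} = {S x0}" if "S x0 \<in> {1..n}" using that by auto
  ultimately show ?thesis
    by (cases "monochromatic e S") auto
qed

lemma sample_expectation_monochromatic:
  assumes V: "finite V" and e: "e \<subseteq> V" "e \<noteq> {}" and sP: "sum P {1..n} = 1"
  shows "sample_expectation n P V (\<lambda>S. of_bool (monochromatic e S)) = (\<Sum>i\<in>{1..n}. P i ^ card e)"
proof -
  have "sample_expectation n P V (\<lambda>S. of_bool (monochromatic e S))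
      = sample_expectation n P V (\<lambda>S. \<Sum>i\<in>{1..n}. of_bool (\<forall>x\<in>e. S x = i))"
    by (rule sample_expectation_cong) (rule of_bool_monochromatic[OF e(2,1)])
  also have "\<dots> = (\<Sum>i\<in>{1..n}. sample_expectation n P V (\<lambda>S. of_bool (\<forall>x\<in>e. S x = i)))"
    by (rule sample_expectation_sum)
  also have "\<dots> = (\<Sum>i\<in>{1..n}. \<Prod>x\<in>e. P i)"
    using V e sP by (intro sum.cong refl sample_expectation_agree) auto
  finally show ?thesis by simp
qed

lemma sample_expectation_monochromatic_disjoint:
  assumes V: "finite V" and e: "e \<subseteq> V" "e \<noteq> {}" and f: "f \<subseteq> V" "f \<noteq> {}"
    and disj: "e \<inter> f = {}" and sP: "sum P {1..n} = 1"
  shows "sample_expectation n P V (\<lambda>S. of_bool (monochromatic e S \<and> monochromatic f S))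
       = (\<Sum>i\<in>{1..n}. P i ^ card e) * (\<Sum>j\<in>{1..n}. P j ^ card f)"
proof -
  define g where "g i j x = (if x \<in> e then i else j)" for i j :: nat and x
  have agree: "(\<forall>x\<in>e. S x = i) \<and> (\<forall>x\<in>f. S x = j) \<longleftrightarrow> (\<forall>x\<in>e \<union> f. S x = g i j x)"
    for S i j using disj by (auto simp: g_def)
  have "of_bool (monochromatic e S \<and> monochromatic f S)
      = (\<Sum>i\<in>{1..n}. \<Sum>j\<in>{1..n}. of_bool (\<forall>x\<in>e \<union> f. S x = g i j x) :: real)"
    if "S \<in> V \<rightarrow>\<^sub>E {1..n}" for S
    unfolding of_bool_conj of_bool_monochromatic[OF e(2,1) that] of_bool_monochromatic[OF f(2,1) that]
      sum_product agree[symmetric] ..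
  then have "sample_expectation n P V (\<lambda>S. of_bool (monochromatic e S \<and> monochromatic f S))
      = (\<Sum>i\<in>{1..n}. \<Sum>j\<in>{1..n}. sample_expectation n P V (\<lambda>S. of_bool (\<forall>x\<in>e \<union> f. S x = g i j x)))"
    by (simp only: sample_expectation_sum cong: sample_expectation_cong)
  also have "\<dots> = (\<Sum>i\<in>{1..n}. \<Sum>j\<in>{1..n}. \<Prod>x\<in>e \<union> f. P (g i j x))"
    using V e f sP by (intro sum.cong refl sample_expectation_agree) (auto simp: g_def)
  also have "\<dots> = (\<Sum>i\<in>{1..n}. \<Sum>j\<in>{1..n}. P i ^ card e * P j ^ card f)"
  proof (intro sum.cong refl)
    fix i j
    have "(\<Prod>x\<in>e \<union> f. P (g i j x)) = (\<Prod>x\<in>e. P (g i j x)) * (\<Prod>x\<in>f. P (g i j x))"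
      using V e f disj by (intro prod.union_disjoint) (auto intro: finite_subset)
    also have "\<dots> = P i ^ card e * P j ^ card f"
    proof -
      have "(\<Prod>x\<in>f. P (g i j x)) = (\<Prod>x\<in>f. P j)"
        using disj by (intro prod.cong) (auto simp: g_def)
      then show ?thesis by (simp add: g_def)
    qed
    finally show "(\<Prod>x\<in>e \<union> f. P (g i j x)) = P i ^ card e * P j ^ card f" .
  qed
  finally show ?thesis
    by (simp add: sum_product)
qed

lemma comparison_graph_finite:
  assumes "comparison_graph V E"
  shows "finite V" and "finite E"
proof -
  show fV: "finite V" using assms unfolding comparison_graph_def by blast
  have "E \<subseteq> Pow V" using assms unfolding comparison_graph_def by fastforce
  then show "finite E" using fV by (meson finite_Pow_iff finite_subset)
qed

lemma comparison_graph_edge: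
  assumes "comparison_graph V E" and "e \<in> E"
  shows "e \<subseteq> V" and "card e = 2" and "e \<noteq> {}"
  using assms unfolding comparison_graph_def by auto

lemma comparison_graph_other_vertex:
  assumes "comparison_graph V E" and "e \<in> E" and "x \<in> e"
  obtains u where "u \<in> V" "u \<noteq> x" "e = {u, x}"
  using assms unfolding comparison_graph_def by (metis insert_commute insert_iff singletonD)

lemma card_Un_doubletons:
  assumes "card e = 2" and "card f = 2" and "e \<noteq> f" and "e \<inter> f \<noteq> {}"
  shows "card (e \<union> f) = 3"
  using assms by (auto simp: card_2_iff doubleton_eq_iff card_insert_if)

definition adjacent_edge_pairs :: "'a set set \<Rightarrow> ('a set \<times> 'a set) set" where
  "adjacent_edge_pairs E = {(e, f) \<in> E \<times> E. e \<noteq> f \<and> e \<inter> f \<noteq> {}}"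

lemma card_adjacent_edge_pairs_le_cG:
  assumes G: "comparison_graph V E"
  shows "card (adjacent_edge_pairs E) \<le> cG V E"
proof -
  let ?T = "{(u, v, w). u \<in> V \<and> v \<in> V \<and> w \<in> V \<and> u \<noteq> v \<and> v \<noteq> w \<and> u \<noteq> w
                 \<and> {u, v} \<in> E \<and> {v, w} \<in> E}"
  have fT: "finite ?T"
    by (rule finite_subset[of _ "V \<times> V \<times> V"]) (auto simp: comparison_graph_finite(1)[OF G])
  have "adjacent_edge_pairs E \<subseteq> (\<lambda>(u, v, w). ({u, v}, {v, w})) ` ?T"
  proof
    fix p assume "p \<in> adjacent_edge_pairs E"
    then obtain e f x where p: "p = (e, f)" "e \<in> E" "f \<in> E" "e \<noteq> f" "x \<in> e" "x \<in> f"
      unfolding adjacent_edge_pairs_def by auto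
    obtain u where u: "u \<in> V" "u \<noteq> x" "e = {u, x}"
      using comparison_graph_other_vertex[OF G p(2,5)] .
    obtain w where w: "w \<in> V" "w \<noteq> x" "f = {x, w}"
      using comparison_graph_other_vertex[OF G p(3,6)] by (metis insert_commute)
    have "x \<in> V" using comparison_graph_edge(1)[OF G p(2)] p(5) by blast
    with u w p show "p \<in> (\<lambda>(u, v, w). ({u, v}, {v, w})) ` ?T"
      by (auto intro!: image_eqI[where x = "(u, x, w)"])
  qed
  then have "card (adjacent_edge_pairs E) \<le> card ((\<lambda>(u, v, w). ({u, v}, {v, w})) ` ?T)"
    by (intro card_mono finite_imageI fT)
  also have "\<dots> \<le> card ?T" by (rule card_image_le[OF fT])
  finally show ?thesis unfolding cG_def .
qed

lemma collisions_eq_sum_monochromatic: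
  assumes "finite E"
  shows "real (collisions E S) = (\<Sum>e\<in>E. of_bool (monochromatic e S))"
  using assms by (simp add: collisions_def monochromatic_def Int_def)

lemma sample_expectation_collisions:
  assumes G: "comparison_graph V E" and sP: "sum P {1..n} = 1"
  shows "sample_expectation n P V (\<lambda>S. real (collisions E S)) = real (card E) * muP n P"
proof -
  have "sample_expectation n P V (\<lambda>S. real (collisions E S))
      = (\<Sum>e\<in>E. sample_expectation n P V (\<lambda>S. of_bool (monochromatic e S)))"
    by (simp only: collisions_eq_sum_monochromatic[OF comparison_graph_finite(2)[OF G]]
        sample_expectation_sum)
  also have "\<dots> = (\<Sum>e\<in>E. muP n P)"
  proof (rule sum.cong[OF refl])
    fix e assume "e \<in> E"
    then show "sample_expectation n P V (\<lambda>S. of_bool (monochromatic e S)) = muP n P"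
      using sample_expectation_monochromatic[OF comparison_graph_finite(1)[OF G] _ _ sP]
        comparison_graph_edge[OF G] by (simp add: muP_def)
  qed
  finally show ?thesis by simp
qed

lemma sample_expectation_monochromatic_pair:
  assumes G: "comparison_graph V E" and sP: "sum P {1..n} = 1" and "e \<in> E" and "f \<in> E"
  shows "sample_expectation n P V (\<lambda>S. of_bool (monochromatic e S \<and> monochromatic f S))
       = (muP n P)^2 + of_bool (e = f) * (muP n P - (muP n P)^2)
         + of_bool ((e, f) \<in> adjacent_edge_pairs E) * (gammaP n P - (muP n P)^2)"
proof -
  note fV = comparison_graph_finite(1)[OF G]
  note e = comparison_graph_edge[OF G \<open>e \<in> E\<close>] and f = comparison_graph_edge[OF G \<open>f \<in> E\<close>]
  consider "e = f" | "e \<inter> f = {}" | "e \<noteq> f" "e \<inter> f \<noteq> {}" by blast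
  then show ?thesis
  proof cases
    case 1
    then show ?thesis
      using sample_expectation_monochromatic[OF fV e(1,3) sP] e(2)
      by (simp add: muP_def adjacent_edge_pairs_def)
  next
    case 2
    moreover have "e \<noteq> f" using 2 e(3) by blast
    ultimately show ?thesis
      using sample_expectation_monochromatic_disjoint[OF fV e(1,3) f(1,3) 2 sP] e(2) f(2)
      by (simp add: muP_def adjacent_edge_pairs_def power2_eq_square)
  next
    case 3
    have "sample_expectation n P V (\<lambda>S. of_bool (monochromatic e S \<and> monochromatic f S))
        = sample_expectation n P V (\<lambda>S. of_bool (monochromatic (e \<union> f) S))"
      using monochromatic_Un[OF 3(2)] by simp
    also have "\<dots> = gammaP n P"
      using sample_expectation_monochromatic[of V "e \<union> f"] fV e f sP
        card_Un_doubletons[OF e(2) f(2) 3] by (simp add: gammaP_def)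
    finally show ?thesis
      using 3 \<open>e \<in> E\<close> \<open>f \<in> E\<close> by (simp add: adjacent_edge_pairs_def)
  qed
qed

lemma sum_sum_of_bool_eq_card:
  assumes "finite A" and "R \<subseteq> A \<times> A"
  shows "(\<Sum>x\<in>A. \<Sum>y\<in>A. of_bool ((x, y) \<in> R)) = of_nat (card R)"
proof -
  have "(\<Sum>x\<in>A. \<Sum>y\<in>A. of_bool ((x, y) \<in> R)) = (\<Sum>p\<in>A \<times> A. of_bool (p \<in> R))"
    by (simp add: sum.cartesian_product)
  also have "\<dots> = of_nat (card R)"
    using assms by (simp add: Int_absorb1 Int_def[symmetric] finite_cartesian_product)
  finally show ?thesis .
qed

lemma sample_expectation_collisions_sq:
  assumes G: "comparison_graph V E" and sP: "sum P {1..n} = 1"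
  shows "sample_expectation n P V (\<lambda>S. (real (collisions E S))^2)
       = (real (card E) * muP n P)^2 + real (card E) * (muP n P - (muP n P)^2)
         + real (card (adjacent_edge_pairs E)) * (gammaP n P - (muP n P)^2)"
proof -
  note fE = comparison_graph_finite(2)[OF G]
  have "sample_expectation n P V (\<lambda>S. (real (collisions E S))^2)
      = (\<Sum>e\<in>E. \<Sum>f\<in>E. sample_expectation n P V
           (\<lambda>S. of_bool (monochromatic e S \<and> monochromatic f S)))"
    by (simp only: collisions_eq_sum_monochromatic[OF fE] power2_eq_square sum_product
        of_bool_conj sample_expectation_sum)
  also have "\<dots> = (\<Sum>e\<in>E. \<Sum>f\<in>E. (muP n P)^2 + of_bool (e = f) * (muP n P - (muP n P)^2)
         + of_bool ((e, f) \<in> adjacent_edge_pairs E) * (gammaP n P - (muP n P)^2))"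
    using G sP by (intro sum.cong refl sample_expectation_monochromatic_pair)
  also have "\<dots> = (real (card E) * muP n P)^2 + real (card E) * (muP n P - (muP n P)^2)
         + real (card (adjacent_edge_pairs E)) * (gammaP n P - (muP n P)^2)"
  proof -
    have "adjacent_edge_pairs E \<subseteq> E \<times> E" by (auto simp: adjacent_edge_pairs_def)
    from sum_sum_of_bool_eq_card[OF fE this]
    have adj: "(\<Sum>e\<in>E. \<Sum>f\<in>E. of_bool ((e, f) \<in> adjacent_edge_pairs E))
        = real (card (adjacent_edge_pairs E))" .
    have diag: "(\<Sum>e\<in>E. \<Sum>f\<in>E. of_bool (e = f)) = real (card E)"
      using fE by simp
    show ?thesis
      unfolding sum.distrib sum_distrib_right[symmetric] adj diag
      by (simp add: power2_eq_square)
  qed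
  finally show ?thesis .
qed

lemma sample_expectation_collisions_variance:
  assumes G: "comparison_graph V E" and sP: "sum P {1..n} = 1"
  shows "sample_expectation n P V (\<lambda>S. (real (collisions E S) - real (card E) * muP n P)^2)
       = real (card E) * (muP n P - (muP n P)^2)
         + real (card (adjacent_edge_pairs E)) * (gammaP n P - (muP n P)^2)"
  using sample_expectation_variance[OF comparison_graph_finite(1)[OF G] sP
      sample_expectation_collisions[OF G sP]] sample_expectation_collisions_sq[OF G sP]
  by simp

lemma sum_squared_le_card_mult_sum_squares:
  fixes f :: "'b \<Rightarrow> real"
  shows "(sum f A)^2 \<le> real (card A) * (\<Sum>x\<in>A. (f x)^2)"
proof (cases "card A = 0")
  case False
  let ?k = "real (card A)"
  have "0 \<le> (\<Sum>x\<in>A. (?k * f x - sum f A)^2)" by (rule sum_nonneg) simp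
  also have "\<dots> = (\<Sum>x\<in>A. ?k^2 * (f x)^2 - 2 * ?k * sum f A * f x + (sum f A)^2)"
    by (simp add: power2_diff power_mult_distrib algebra_simps)
  also have "\<dots> = ?k^2 * (\<Sum>x\<in>A. (f x)^2) - 2 * ?k * sum f A * sum f A + ?k * (sum f A)^2"
    by (simp add: sum.distrib sum_subtractf sum_distrib_left)
  also have "\<dots> = ?k * (?k * (\<Sum>x\<in>A. (f x)^2) - (sum f A)^2)"
    by (simp add: power2_eq_square algebra_simps)
  finally show ?thesis
    using False by (simp add: zero_le_mult_iff)
qed (auto simp: card_eq_0_iff)

lemma sum_deviation_uniform:
  assumes "n \<ge> 1" and "sum P {1..n} = 1"
  shows "(\<Sum>i\<in>{1..n}. P i - 1 / real n) = 0"
  using assms by (simp add: sum_subtractf)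

lemma sum_sq_deviation_uniform:
  assumes "n \<ge> 1" and "sum P {1..n} = 1"
  shows "(\<Sum>i\<in>{1..n}. (P i - 1 / real n)^2) = muP n P - 1 / real n"
proof -
  have "(\<Sum>i\<in>{1..n}. (P i - 1 / real n)^2)
      = (\<Sum>i\<in>{1..n}. (P i)^2 - 2 / real n * P i + 1 / (real n)^2)"
    by (simp add: power2_diff power_divide algebra_simps)
  also have "\<dots> = muP n P - 2 / real n * sum P {1..n} + real n / (real n)^2"
    by (simp add: muP_def sum.distrib sum_subtractf sum_distrib_left)
  finally show ?thesis
    using assms by (simp add: power2_eq_square)
qed

lemma dist_unif_sq_le:
  assumes "n \<ge> 1" and "sum P {1..n} = 1"
  shows "(dist_unif n P)^2 / real n \<le> muP n P - 1 / real n"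
proof -
  have "(dist_unif n P)^2 \<le> real n * (\<Sum>i\<in>{1..n}. \<bar>P i - 1 / real n\<bar>^2)"
    unfolding dist_unif_def
    using sum_squared_le_card_mult_sum_squares[of "\<lambda>i. \<bar>P i - 1 / real n\<bar>" "{1..n}"] by simp
  then show ?thesis
    using assms sum_sq_deviation_uniform[OF assms] by (simp add: field_simps)
qed

lemma gammaP_sub_muP_sq_le:
  assumes n: "n \<ge> 1" and sP: "sum P {1..n} = 1"
  defines "\<delta> \<equiv> muP n P - 1 / real n"
  shows "gammaP n P - (muP n P)^2 \<le> \<delta> / real n + sqrt \<delta> * \<delta>"
proof -
  define c where "c = 1 / real n"
  define D where "D i = P i - c" for i
  have sum_D: "(\<Sum>i\<in>{1..n}. D i) = 0" and sum_D2: "(\<Sum>i\<in>{1..n}. (D i)^2) = \<delta>"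
    using sum_deviation_uniform[OF n sP] sum_sq_deviation_uniform[OF n sP]
    by (simp_all add: D_def c_def \<delta>_def)
  have cube: "(D i)^3 \<le> sqrt \<delta> * (D i)^2" if "i \<in> {1..n}" for i
  proof -
    have "(D i)^2 \<le> \<delta>"
      unfolding sum_D2[symmetric] using that by (intro member_le_sum) simp_all
    then have "\<bar>D i\<bar> \<le> sqrt \<delta>" using real_sqrt_le_mono by fastforce
    then have "D i * (D i)^2 \<le> sqrt \<delta> * (D i)^2" by (intro mult_right_mono) simp_all
    then show ?thesis by (simp add: power3_eq_cube power2_eq_square)
  qed
  have "gammaP n P = (\<Sum>i\<in>{1..n}. c^3 + 3 * c^2 * D i + 3 * c * (D i)^2 + (D i)^3)"
    unfolding gammaP_def D_def by (intro sum.cong refl) (simp add: power3_eq_cube power2_eq_square algebra_simps)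
  also have "\<dots> = real n * c^3 + 3 * c * \<delta> + (\<Sum>i\<in>{1..n}. (D i)^3)"
    using sum_D sum_D2 by (simp add: sum.distrib sum_distrib_left[symmetric])
  also have "\<dots> \<le> real n * c^3 + 3 * c * \<delta> + sqrt \<delta> * \<delta>"
  proof -
    have "(\<Sum>i\<in>{1..n}. (D i)^3) \<le> (\<Sum>i\<in>{1..n}. sqrt \<delta> * (D i)^2)"
      by (rule sum_mono) (rule cube)
    then show ?thesis using sum_D2 by (simp add: sum_distrib_left[symmetric])
  qed
  finally have "gammaP n P \<le> real n * c^3 + 3 * c * \<delta> + sqrt \<delta> * \<delta>" .
  moreover have "muP n P = c + \<delta>" by (simp add: \<delta>_def c_def)
  moreover have "real n * c^3 = c^2" using n by (simp add: c_def power2_eq_square power3_eq_cube)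
  ultimately have "gammaP n P - (muP n P)^2 \<le> \<delta> / real n + sqrt \<delta> * \<delta> - \<delta>^2"
    by (simp add: power2_eq_square algebra_simps c_def)
  then show ?thesis
    using zero_le_power2[of \<delta>] by linarith
qed

lemma muP_le_1:
  assumes "is_distr n P"
  shows "muP n P \<le> 1"
proof -
  have "P i ^ 2 \<le> P i" if "i \<in> {1..n}" for i
  proof -
    have "P i \<le> 1"
      using assms member_le_sum[OF that, of P] unfolding is_distr_def by auto
    then show ?thesis using assms that unfolding is_distr_def
      by (simp add: power2_eq_square mult_left_le)
  qed
  then show ?thesis
    using assms unfolding is_distr_def by (metis (no_types, lifting) sum_mono muP_def)
qed

lemma muP_ge_far_from_uniform:
  assumes "n \<ge> 1" and "is_distr n P" and "0 \<le> \<epsilon>" and "\<epsilon> \<le> dist_unif n P"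
  shows "\<epsilon>^2 / real n \<le> muP n P - 1 / real n"
proof -
  have "\<epsilon>^2 / real n \<le> (dist_unif n P)^2 / real n"
    using assms by (intro divide_right_mono power_mono) simp_all
  also have "\<dots> \<le> muP n P - 1 / real n"
    using assms(1,2) dist_unif_sq_le unfolding is_distr_def by blast
  finally show ?thesis .
qed

lemma gammaP_sub_muP_sq_le_far_from_uniform:
  assumes n: "n \<ge> 1" and d: "is_distr n P"
    and e: "0 < \<epsilon>" "\<epsilon> \<le> 1" "\<epsilon> \<le> dist_unif n P"
  shows "\<epsilon>^2 * (gammaP n P - (muP n P)^2) \<le> 2 * sqrt (real n) * (muP n P - 1 / real n)^2"
proof -
  define \<delta> where "\<delta> = muP n P - 1 / real n"
  have nn: "real n > 0" using n by simp
  have le: "\<epsilon>^2 / real n \<le> \<delta>" unfolding \<delta>_def using muP_ge_far_from_uniform[OF n d] e by simp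
  then have e_sq: "\<epsilon>^2 \<le> real n * \<delta>"
    using nn by (simp add: pos_divide_le_eq mult.commute)
  have "0 \<le> \<epsilon>^2 / real n" by simp
  with le have d0: "0 \<le> \<delta>" by linarith
  have "\<epsilon> \<le> sqrt (real n) * sqrt \<delta>"
    using real_sqrt_le_mono[OF e_sq] e(1) by (simp add: real_sqrt_mult)
  moreover have "\<epsilon>^2 \<le> \<epsilon>" using e by (simp add: power2_eq_square mult_left_le)
  ultimately have "\<epsilon>^2 * (sqrt \<delta> * \<delta>) \<le> (sqrt (real n) * sqrt \<delta>) * (sqrt \<delta> * \<delta>)"
    using d0 by (intro mult_right_mono) simp_all
  also have "\<dots> = sqrt (real n) * (sqrt \<delta> * sqrt \<delta>) * \<delta>" by (simp only: mult_ac)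
  finally have cubic: "\<epsilon>^2 * (sqrt \<delta> * \<delta>) \<le> sqrt (real n) * \<delta>^2"
    using d0 by (simp add: power2_eq_square mult_ac)
  have "\<epsilon>^2 * (\<delta> / real n) \<le> (real n * \<delta>) * (\<delta> / real n)"
    using e_sq d0 nn by (intro mult_right_mono) simp_all
  also have "\<dots> = 1 * \<delta>^2" using nn by (simp add: power2_eq_square)
  also have "\<dots> \<le> sqrt (real n) * \<delta>^2"
    using n by (intro mult_right_mono) simp_all
  finally have quadratic: "\<epsilon>^2 * (\<delta> / real n) \<le> sqrt (real n) * \<delta>^2" .
  have "\<epsilon>^2 * (gammaP n P - (muP n P)^2) \<le> \<epsilon>^2 * (\<delta> / real n + sqrt \<delta> * \<delta>)"
    using gammaP_sub_muP_sq_le[OF n] d unfolding is_distr_def \<delta>_def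
    by (intro mult_left_mono) simp_all
  also have "\<dots> \<le> 2 * sqrt (real n) * \<delta>^2"
    using cubic quadratic by (simp add: distrib_left)
  finally show ?thesis unfolding \<delta>_def .
qed

lemma collisions_variance_le:
  assumes n: "n \<ge> 1" and e: "0 < \<epsilon>" "\<epsilon> \<le> 1"
    and G: "comparison_graph V E" and d: "is_distr n P" and du: "\<epsilon> \<le> dist_unif n P"
    and hyp: "real (card E) * (muP n P - (muP n P)^2) < real (cG V E) * (gammaP n P - (muP n P)^2)"
    and hc: "real (cG V E) \<le> (real (card E))^2 * (1 - \<tau>)^2 * \<epsilon>^2 / (16 * sqrt (real n))"
  shows "real (card E) * (muP n P - (muP n P)^2)
           + real (card (adjacent_edge_pairs E)) * (gammaP n P - (muP n P)^2)
         \<le> (real (card E) * (1 - \<tau>) * (muP n P - 1 / real n))^2 / 4"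
proof -
  define k \<mu> \<gamma> \<delta> c where "k = real (card E)" and "\<mu> = muP n P" and "\<gamma> = gammaP n P"
    and "\<delta> = muP n P - 1 / real n" and "c = real (cG V E)"
  have sn: "sqrt (real n) > 0" using n by simp
  have "0 \<le> \<mu>" by (simp add: \<mu>_def muP_def sum_nonneg)
  then have "\<mu>^2 \<le> \<mu>"
    unfolding power2_eq_square using muP_le_1[OF d] by (simp add: \<mu>_def mult_left_le)
  then have "0 \<le> k * (\<mu> - \<mu>^2)" by (simp add: k_def)
  with hyp have "0 < c * (\<gamma> - \<mu>^2)" by (simp add: k_def c_def \<mu>_def \<gamma>_def)
  then have excess_pos: "0 < \<gamma> - \<mu>^2" by (simp add: c_def zero_less_mult_iff)
  have "real (card (adjacent_edge_pairs E)) * (\<gamma> - \<mu>^2) \<le> c * (\<gamma> - \<mu>^2)"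
    using card_adjacent_edge_pairs_le_cG[OF G] excess_pos by (simp add: c_def)
  with hyp have "k * (\<mu> - \<mu>^2) + real (card (adjacent_edge_pairs E)) * (\<gamma> - \<mu>^2)
      \<le> 2 * c * (\<gamma> - \<mu>^2)"
    by (simp add: k_def c_def \<mu>_def \<gamma>_def)
  also have "\<dots> \<le> 2 * (k^2 * (1 - \<tau>)^2 * \<epsilon>^2 / (16 * sqrt (real n))) * (\<gamma> - \<mu>^2)"
    using hc excess_pos by (intro mult_right_mono mult_left_mono) (simp_all add: k_def c_def)
  also have "\<dots> = k^2 * (1 - \<tau>)^2 * (\<epsilon>^2 * (\<gamma> - \<mu>^2)) / (8 * sqrt (real n))"
    by (simp add: field_simps)
  also have "\<dots> \<le> k^2 * (1 - \<tau>)^2 * (2 * sqrt (real n) * \<delta>^2) / (8 * sqrt (real n))"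
    using gammaP_sub_muP_sq_le_far_from_uniform[OF n d e du] unfolding \<mu>_def \<gamma>_def \<delta>_def
    by (intro divide_right_mono mult_left_mono) simp_all
  also have "\<dots> = (k * (1 - \<tau>) * \<delta>)^2 / 4"
    using sn by (simp add: field_simps power2_eq_square)
  finally show ?thesis by (simp add: k_def \<mu>_def \<gamma>_def \<delta>_def)
qed

lemma collision_threshold_gap:
  assumes n: "n \<ge> 1" and e: "0 < \<epsilon>" "\<epsilon> \<le> dist_unif n P" and t: "0 \<le> \<tau>" "\<tau> < 1"
    and "card E \<ge> 1" and d: "is_distr n P"
  defines "gap \<equiv> real (card E) * (1 - \<tau>) * (muP n P - 1 / real n)"
  shows "0 < gap"
    and "gap \<le> real (card E) * muP n P - real (card E) * (1 + \<tau> * \<epsilon>^2) / real n"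
proof -
  define k \<delta> where "k = real (card E)" and "\<delta> = muP n P - 1 / real n"
  have excess: "\<epsilon>^2 / real n \<le> \<delta>"
    unfolding \<delta>_def using muP_ge_far_from_uniform[OF n d] e by simp
  moreover have "0 < \<epsilon>^2 / real n" using e n by simp
  ultimately show "0 < gap" using t \<open>card E \<ge> 1\<close> by (simp add: gap_def \<delta>_def)
  have "\<tau> * (\<epsilon>^2 / real n) \<le> \<tau> * \<delta>"
    using excess t(1) by (rule mult_left_mono)
  then have "k * ((1 - \<tau>) * \<delta>) \<le> k * (\<delta> - \<tau> * (\<epsilon>^2 / real n))"
    by (intro mult_left_mono) (simp_all add: k_def algebra_simps)
  also have "\<dots> = k * muP n P - k * (1 + \<tau> * \<epsilon>^2) / real n"
    by (simp add: \<delta>_def algebra_simps add_divide_distrib)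
  finally show "gap \<le> real (card E) * muP n P - real (card E) * (1 + \<tau> * \<epsilon>^2) / real n"
    by (simp add: gap_def k_def \<delta>_def mult.assoc)
qed

theorem lemma11:
  fixes n :: nat and \<epsilon> \<tau> :: real and V :: "'a set" and E :: "'a set set"
    and P :: "nat \<Rightarrow> real"
  assumes "n \<ge> 1" and "0 < \<epsilon>" and "\<epsilon> \<le> 1" and "0 \<le> \<tau>" and "\<tau> < 1"
    and "comparison_graph V E" and "card E \<ge> 1"
    and "is_distr n P" and "dist_unif n P \<ge> \<epsilon>"
    and "real (card E) * (muP n P - (muP n P)^2) < real (cG V E) * (gammaP n P - (muP n P)^2)"
    and "real (cG V E) \<le> (real (card E))^2 * (1 - \<tau>)^2 * \<epsilon>^2 / (16 * sqrt (real n))"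
  shows "prob_yes n P \<tau> \<epsilon> V E \<le> 1 / 4"
proof -
  let ?Z = "\<lambda>S. real (collisions E S)"
  define m where "m = real (card E) * muP n P"
  define T where "T = real (card E) * (1 + \<tau> * \<epsilon>^2) / real n"
  define gap where "gap = real (card E) * (1 - \<tau>) * (muP n P - 1 / real n)"
  have sP: "sum P {1..n} = 1" and P0: "\<forall>i\<in>{1..n}. 0 \<le> P i"
    using \<open>is_distr n P\<close> by (auto simp: is_distr_def)
  have gap_pos: "0 < gap" and gap_le: "gap \<le> m - T"
    using collision_threshold_gap[OF assms(1,2,9,4,5,7,8)] by (simp_all add: gap_def m_def T_def)
  have "prob_yes n P \<tau> \<epsilon> V E = sample_expectation n P V (\<lambda>S. of_bool (?Z S < T))"
    unfolding prob_yes_def sample_expectation_def outputs_yes_def T_def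
    by (intro sum.cong refl) simp
  also have "\<dots> \<le> sample_expectation n P V (\<lambda>S. (?Z S - m)^2) / (m - T)^2"
    using gap_pos gap_le by (intro sample_expectation_chebyshev_lower[OF P0]) simp
  also have "\<dots> \<le> (gap^2 / 4) / (m - T)^2"
    using sample_expectation_collisions_variance[OF assms(6) sP]
      collisions_variance_le[OF assms(1,2,3,6,8,9,10,11)]
    by (intro divide_right_mono) (simp_all add: m_def gap_def)
  also have "\<dots> \<le> (gap^2 / 4) / gap^2"
    using gap_pos gap_le by (intro divide_left_mono power_mono) simp_all
  also have "\<dots> = 1 / 4" using gap_pos by simp
  finally show ?thesis .
qed

end
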